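(* Let $\mathcal{A},\mathcal{B}$ be test spaces with outcome sets $X,Y$, and let $\omega$ be a probability weight on $\mathcal{A}\times\mathcal{B}$. Then $\omega$ exhibits no influence from $\mathcal{B}$ to $\mathcal{A}$ iff $\omega\in\Pr(\overrightarrow{\mathcal{A}\mathcal{B}})$; $\omega$ exhibits no influence from $\mathcal{A}$ to $\mathcal{B}$ iff $\omega\in\Pr(\overleftarrow{\mathcal{A}\mathcal{B}})$; and $\omega$ is non-signaling iff $\omega\in\Pr(\overrightarrow{\mathcal{A}\mathcal{B}}\cup\overleftarrow{\mathcal{A}\mathcal{B}})$.
   Context: A test space is an irredundant collection of nonempty sets (tests). For a collection $\mathcal{T}$ of subsets of $X\times Y$, $\Pr(\mathcal{T})$ is the set of functions $\omega:X\times Y\to[0,1]$ with $\sum_{(x,y)\in S}\omega(x,y)=1$ for every $S\in\mathcal{T}$. $\mathcal{A}\times\mathcal{B}=\{E\times F:E\in\mathcal{A},F\in\mathcal{B}\}$. The forward product $\overrightarrow{\mathcal{A}\mathcal{B}}$ consists of all sets $\bigcup_{x\in E}\{x\}\times F_x$ with $E\in\mathcal{A}$ and $F:E\to\mathcal{B}$; the backward product $\overleftarrow{\mathcal{A}\mathcal{B}}$ consists of all sets $\bigcup_{y\in F}E_y\times\{y\}$ with $F\in\mathcal{B}$ and $E:F\to\mathcal{A}$. Write $\omega(E,y)=\sum_{x\in E}\omega(x,y)$ and $\omega(x,F)=\sum_{y\in F}\omega(x,y)$. $\omega$ exhibits no influence from $\mathcal{A}$ to $\mathcal{B}$ if $\omega(E,y)=\omega(E',y)$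 for all $E,E'\in\mathcal{A}$, $y\in Y$; no influence from $\mathcal{B}$ to $\mathcal{A}$ if $\omega(x,F)=\omega(x,F')$ for all $F,F'\in\mathcal{B}$, $x\in X$; and is non-signaling if both hold. *)

theory Defs
  imports "HOL-Analysis.Analysis"
begin

definition test_space :: "'a set set \<Rightarrow> bool" where
  "test_space \<A> \<longleftrightarrow> (\<forall>E\<in>\<A>. E \<noteq> {}) \<and> (\<forall>E\<in>\<A>. \<forall>E'\<in>\<A>. E \<subseteq> E' \<longrightarrow> E = E')"

abbreviation outcomes :: "'a set set \<Rightarrow> 'a set" where
  "outcomes \<A> \<equiv> \<Union>\<A>"

text \<open>Pr(T): functions X \<times> Y \<rightarrow> [0,1] summing to 1 over every set in T
  (sums are unordered sums of nonnegative reals, so tests need not be finite).\<close>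
definition Pr :: "'a set \<Rightarrow> 'b set \<Rightarrow> ('a \<times> 'b) set set \<Rightarrow> ('a \<times> 'b \<Rightarrow> real) set" where
  "Pr X Y T = {\<omega>. (\<forall>p\<in>X \<times> Y. 0 \<le> \<omega> p \<and> \<omega> p \<le> 1) \<and> (\<forall>S\<in>T. (\<omega> has_sum 1) S)}"

definition prod_ts :: "'a set set \<Rightarrow> 'b set set \<Rightarrow> ('a \<times> 'b) set set" where
  "prod_ts \<A> \<B> = {E \<times> F | E F. E \<in> \<A> \<and> F \<in> \<B>}"

definition fwd_prod :: "'a set set \<Rightarrow> 'b set set \<Rightarrow> ('a \<times> 'b) set set" where
  "fwd_prod \<A> \<B> = {(\<Union>x\<in>E. {x} \<times> F x) | E F. E \<in> \<A> \<and> (\<forall>x\<in>E. F x \<in> \<B>)}"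

definition bwd_prod :: "'a set set \<Rightarrow> 'b set set \<Rightarrow> ('a \<times> 'b) set set" where
  "bwd_prod \<A> \<B> = {(\<Union>y\<in>F. E y \<times> {y}) | F E. F \<in> \<B> \<and> (\<forall>y\<in>F. E y \<in> \<A>)}"

definition margL :: "('a \<times> 'b \<Rightarrow> real) \<Rightarrow> 'a set \<Rightarrow> 'b \<Rightarrow> real" where
  "margL \<omega> E y = (\<Sum>\<^sub>\<infinity>x\<in>E. \<omega> (x, y))"

definition margR :: "('a \<times> 'b \<Rightarrow> real) \<Rightarrow> 'a \<Rightarrow> 'b set \<Rightarrow> real" where
  "margR \<omega> x F = (\<Sum>\<^sub>\<infinity>y\<in>F. \<omega> (x, y))"

definition no_infl_AB :: "'a set set \<Rightarrow> 'b set set \<Rightarrow> ('a \<times> 'b \<Rightarrow> real) \<Rightarrow> bool" where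
  "no_infl_AB \<A> \<B> \<omega> \<longleftrightarrow> (\<forall>E\<in>\<A>. \<forall>E'\<in>\<A>. \<forall>y\<in>outcomes \<B>. margL \<omega> E y = margL \<omega> E' y)"

definition no_infl_BA :: "'a set set \<Rightarrow> 'b set set \<Rightarrow> ('a \<times> 'b \<Rightarrow> real) \<Rightarrow> bool" where
  "no_infl_BA \<A> \<B> \<omega> \<longleftrightarrow> (\<forall>F\<in>\<B>. \<forall>F'\<in>\<B>. \<forall>x\<in>outcomes \<A>. margR \<omega> x F = margR \<omega> x F')"

definition non_signaling :: "'a set set \<Rightarrow> 'b set set \<Rightarrow> ('a \<times> 'b \<Rightarrow> real) \<Rightarrow> bool" where
  "non_signaling \<A> \<B> \<omega> \<longleftrightarrow> no_infl_AB \<A> \<B> \<omega> \<and> no_infl_BA \<A> \<B> \<omega>"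

end

theory Submission
  imports Defs
begin

text \<open>A forward test \<Union>x\<in>E. {x} \<times> F x is a disjoint union of rows, and the row {x} \<times> F
  carries the weight \<omega>(x,F). If \<omega>(x,F) does not depend on F, every forward test over E has the
  same row weights as a rectangle E \<times> F, hence total weight 1; non-negativity of \<omega> makes
  the summation row by row legitimate for infinite tests. Conversely, two forward tests that
  differ only in the row of x share all other rows, so their rows at x have equal weight.
  Backward tests are forward tests for the swapped weight, and non-signaling is the
  conjunction of both.\<close>

lemma has_sum_row_iff:
  "(f has_sum s) ({x} \<times> B) \<longleftrightarrow> ((\<lambda>y. f (x, y)) has_sum s) B"
  by (rule has_sum_reindex_bij_betw[symmetric]) (auto simp: bij_betw_def inj_on_def)

lemma has_sum_Diff_subset:
  fixes f :: "'a \<Rightarrow> 'b::banach"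
  assumes "(f has_sum s) S" and "R \<subseteq> S"
  shows "(f has_sum (s - infsum f R)) (S - R)"
proof (rule has_sum_Diff[OF assms(1) _ assms(2)])
  have "f summable_on S" using assms(1) by (auto simp: summable_on_def)
  then show "(f has_sum infsum f R) R"
    using assms(2) by (intro has_sum_infsum) (rule summable_on_subset_banach)
qed

lemma has_sum_Sigma_nonneg:
  fixes f :: "'a \<times> 'b \<Rightarrow> 'c::{linorder_topology, conditionally_complete_linorder, t3_space,
                                ordered_comm_monoid_add, topological_comm_monoid_add}"
  assumes "\<And>x y. x \<in> A \<Longrightarrow> y \<in> B x \<Longrightarrow> 0 \<le> f (x, y)"
    and rows: "\<And>x. x \<in> A \<Longrightarrow> ((\<lambda>y. f (x, y)) has_sum g x) (B x)"
    and "(g has_sum s) A"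
  shows "(f has_sum s) (Sigma A B)"
proof (rule has_sum_SigmaI[OF rows \<open>(g has_sum s) A\<close>])
  show "f summable_on Sigma A B"
    using assms by (intro summable_on_SigmaI[where g = g]) (auto simp: summable_on_def)
qed

lemma has_sum_margR:
  fixes \<omega> :: "'a \<times> 'b \<Rightarrow> real"
  assumes "\<omega> summable_on A \<times> B" and "x \<in> A"
  shows "((\<lambda>y. \<omega> (x, y)) has_sum margR \<omega> x B) B"
proof -
  have "curry \<omega> x summable_on B"
    by (rule summable_on_SigmaD1) (use assms in auto)
  then show ?thesis
    unfolding margR_def curry_def by (rule has_sum_infsum)
qed

lemma fwd_prod_eq: "fwd_prod \<A> \<B> = {Sigma E G | E G. E \<in> \<A> \<and> (\<forall>x\<in>E. G x \<in> \<B>)}"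
  unfolding fwd_prod_def Sigma_def by blast

lemma Pr_fwd_prod_if_no_infl_BA:
  assumes "test_space \<A>" and P: "\<omega> \<in> Pr (outcomes \<A>) (outcomes \<B>) (prod_ts \<A> \<B>)"
    and no_infl: "no_infl_BA \<A> \<B> \<omega>"
  shows "\<omega> \<in> Pr (outcomes \<A>) (outcomes \<B>) (fwd_prod \<A> \<B>)"
proof -
  have bounds: "\<forall>p\<in>outcomes \<A> \<times> outcomes \<B>. 0 \<le> \<omega> p \<and> \<omega> p \<le> 1"
    using P by (simp add: Pr_def)
  have rect: "(\<omega> has_sum 1) (E \<times> F)" if "E \<in> \<A>" "F \<in> \<B>" for E F
    using P that unfolding Pr_def prod_ts_def by blast
  then have rect_summable: "\<omega> summable_on E \<times> F" if "E \<in> \<A>" "F \<in> \<B>" for E F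
    using that by (auto simp: summable_on_def)
  have "(\<omega> has_sum 1) (Sigma E G)" if E: "E \<in> \<A>" and G: "\<forall>x\<in>E. G x \<in> \<B>" for E G
  proof -
    obtain x0 where "x0 \<in> E"
      using \<open>test_space \<A>\<close> E unfolding test_space_def by blast
    then have F0: "G x0 \<in> \<B>" using G by blast
    have rows: "((\<lambda>y. \<omega> (x, y)) has_sum margR \<omega> x (G x0)) (G x)" if "x \<in> E" for x
    proof -
      have "G x \<in> \<B>" using G that by blast
      then have "margR \<omega> x (G x) = margR \<omega> x (G x0)"
        using no_infl F0 E that unfolding no_infl_BA_def by blast
      with has_sum_margR[OF rect_summable[OF E \<open>G x \<in> \<B>\<close>] that] show ?thesis
        by simp
    qed
    have "((\<lambda>x. margR \<omega> x (G x0)) has_sum 1) E"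
      using rect[OF E F0] by (rule has_sum_SigmaD) (rule has_sum_margR[OF rect_summable[OF E F0]])
    then show ?thesis
      using bounds E G rows by (intro has_sum_Sigma_nonneg) auto
  qed
  with bounds show ?thesis
    unfolding Pr_def fwd_prod_eq by blast
qed

text \<open>Replacing the row of x in the forward test E \<times> F' by {x} \<times> F leaves the remainder
  (E - {x}) \<times> F' unchanged, so both rows carry weight 1 minus the weight of that remainder.\<close>
lemma no_infl_BA_if_Pr_fwd_prod:
  assumes P: "\<omega> \<in> Pr X Y (fwd_prod \<A> \<B>)"
  shows "no_infl_BA \<A> \<B> \<omega>"
  unfolding no_infl_BA_def
proof (intro ballI)
  fix F F' x assume F: "F \<in> \<B>" and F': "F' \<in> \<B>" and "x \<in> outcomes \<A>"
  then obtain E where E: "E \<in> \<A>" and "x \<in> E" by blast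
  have fwd: "(\<omega> has_sum 1) (Sigma E G)" if "\<forall>x\<in>E. G x \<in> \<B>" for G
    using P E that unfolding Pr_def fwd_prod_eq by blast
  define R where "R = (E - {x}) \<times> F'"
  have row: "((\<lambda>y. \<omega> (x, y)) has_sum (1 - infsum \<omega> R)) H" if "H \<in> \<B>" for H
  proof -
    let ?G = "(\<lambda>_. F')(x := H)"
    have "(\<omega> has_sum (1 - infsum \<omega> R)) (Sigma E ?G - R)"
      using fwd[of ?G] F' \<open>H \<in> \<B>\<close> by (intro has_sum_Diff_subset) (auto simp: R_def)
    moreover have "Sigma E ?G - R = {x} \<times> H"
      using \<open>x \<in> E\<close> by (auto simp: R_def split: if_splits)
    ultimately show ?thesis by (simp add: has_sum_row_iff)
  qed
  show "margR \<omega> x F = margR \<omega> x F'"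
    using row[OF F] row[OF F'] unfolding margR_def by (simp add: infsumI)
qed

lemma no_infl_BA_iff_Pr_fwd_prod:
  assumes "test_space \<A>" and "\<omega> \<in> Pr (outcomes \<A>) (outcomes \<B>) (prod_ts \<A> \<B>)"
  shows "no_infl_BA \<A> \<B> \<omega> \<longleftrightarrow> \<omega> \<in> Pr (outcomes \<A>) (outcomes \<B>) (fwd_prod \<A> \<B>)"
  using assms Pr_fwd_prod_if_no_infl_BA no_infl_BA_if_Pr_fwd_prod by blast

lemma Pr_swap:
  "\<omega> \<in> Pr X Y T \<longleftrightarrow> \<omega> \<circ> prod.swap \<in> Pr Y X ((`) prod.swap ` T)"
proof -
  have "((\<omega> \<circ> prod.swap) has_sum c) (prod.swap ` S) \<longleftrightarrow> (\<omega> has_sum c) S" for S c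
    by (subst has_sum_reindex) (auto simp: inj_on_def o_def)
  then show ?thesis
    unfolding Pr_def by auto
qed

lemma prod_ts_swap: "(`) prod.swap ` prod_ts \<A> \<B> = prod_ts \<B> \<A>"
proof (intro equalityI subsetI)
  fix S assume "S \<in> (`) prod.swap ` prod_ts \<A> \<B>"
  then obtain E F where "S = F \<times> E" "E \<in> \<A>" "F \<in> \<B>"
    unfolding prod_ts_def by (auto simp only: product_swap)
  then show "S \<in> prod_ts \<B> \<A>"
    unfolding prod_ts_def by blast
next
  fix S assume "S \<in> prod_ts \<B> \<A>"
  then obtain E F where "S = prod.swap ` (E \<times> F)" "E \<in> \<A>" "F \<in> \<B>"
    unfolding prod_ts_def product_swap by blast
  then show "S \<in> (`) prod.swap ` prod_ts \<A> \<B>"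
    unfolding prod_ts_def by blast
qed

lemma swap_UN_times_singleton: "prod.swap ` (\<Union>y\<in>F. E y \<times> {y}) = Sigma F E"
  by force

lemma bwd_prod_swap: "(`) prod.swap ` bwd_prod \<A> \<B> = fwd_prod \<B> \<A>"
proof (intro equalityI subsetI)
  fix S assume "S \<in> (`) prod.swap ` bwd_prod \<A> \<B>"
  then obtain F E where "S = Sigma F E" "F \<in> \<B>" "\<forall>y\<in>F. E y \<in> \<A>"
    unfolding bwd_prod_def by (auto simp only: swap_UN_times_singleton)
  then show "S \<in> fwd_prod \<B> \<A>"
    unfolding fwd_prod_eq by blast
next
  fix S assume "S \<in> fwd_prod \<B> \<A>"
  then obtain F E where "S = prod.swap ` (\<Union>y\<in>F. E y \<times> {y})" "F \<in> \<B>" "\<forall>y\<in>F. E y \<in> \<A>"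
    unfolding fwd_prod_eq swap_UN_times_singleton by blast
  then show "S \<in> (`) prod.swap ` bwd_prod \<A> \<B>"
    unfolding bwd_prod_def by blast
qed

lemma no_infl_AB_swap: "no_infl_AB \<A> \<B> \<omega> \<longleftrightarrow> no_infl_BA \<B> \<A> (\<omega> \<circ> prod.swap)"
  unfolding no_infl_AB_def no_infl_BA_def margL_def margR_def by simp

lemma Pr_Un: "Pr X Y (T \<union> T') = Pr X Y T \<inter> Pr X Y T'"
  unfolding Pr_def by auto

theorem lemma3p3:
  fixes \<A> :: "'a set set" and \<B> :: "'b set set" and \<omega> :: "'a \<times> 'b \<Rightarrow> real"
  assumes "test_space \<A>" and "test_space \<B>"
    and "\<omega> \<in> Pr (outcomes \<A>) (outcomes \<B>) (prod_ts \<A> \<B>)"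
  shows "(no_infl_BA \<A> \<B> \<omega> \<longleftrightarrow> \<omega> \<in> Pr (outcomes \<A>) (outcomes \<B>) (fwd_prod \<A> \<B>))
       \<and> (no_infl_AB \<A> \<B> \<omega> \<longleftrightarrow> \<omega> \<in> Pr (outcomes \<A>) (outcomes \<B>) (bwd_prod \<A> \<B>))
       \<and> (non_signaling \<A> \<B> \<omega> \<longleftrightarrow>
            \<omega> \<in> Pr (outcomes \<A>) (outcomes \<B>) (fwd_prod \<A> \<B> \<union> bwd_prod \<A> \<B>))"
proof -
  have fwd: "no_infl_BA \<A> \<B> \<omega> \<longleftrightarrow> \<omega> \<in> Pr (outcomes \<A>) (outcomes \<B>) (fwd_prod \<A> \<B>)"
    using no_infl_BA_iff_Pr_fwd_prod assms(1,3) .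
  have "\<omega> \<circ> prod.swap \<in> Pr (outcomes \<B>) (outcomes \<A>) (prod_ts \<B> \<A>)"
    using Pr_swap[THEN iffD1, OF assms(3)] unfolding prod_ts_swap .
  then have "no_infl_AB \<A> \<B> \<omega> \<longleftrightarrow>
      \<omega> \<circ> prod.swap \<in> Pr (outcomes \<B>) (outcomes \<A>) ((`) prod.swap ` bwd_prod \<A> \<B>)"
    unfolding no_infl_AB_swap bwd_prod_swap by (rule no_infl_BA_iff_Pr_fwd_prod[OF assms(2)])
  then have bwd: "no_infl_AB \<A> \<B> \<omega> \<longleftrightarrow> \<omega> \<in> Pr (outcomes \<A>) (outcomes \<B>) (bwd_prod \<A> \<B>)"
    unfolding Pr_swap[symmetric] .
  show ?thesis
    using fwd bwd unfolding non_signaling_def Pr_Un by blast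
qed

end
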